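(* Let $E\subseteq\omega_1$ be stationary and $T$ an SS Aronszajn tree. Let $\langle x_\alpha:\alpha\in E\rangle$ be a sequence of finite antichains of $T$. Then there is a stationary $E'\subseteq E$ such that $\bigcup_{\alpha\in E'}x_\alpha$ is an antichain of $T$.
   Context: An Aronszajn tree is a tree of height $\omega_1$ all of whose levels and chains are countable. A subset $X\subseteq T$ is stationary if $\{\mathrm{ht}(t):t\in X\}$ is stationary in $\omega_1$. $T$ is SS if every stationary subset of $T$ contains a stationary antichain. *)

theory Defs
  imports Main "HOL-Library.Countable_Set"
begin

text \<open>omega_1 is represented by a well-ordered type 'i that is uncountable
  and all of whose proper initial segments are countable.\<close>
definition is_omega1 :: "'i::wellorder itself \<Rightarrow> bool" where
  "is_omega1 _ \<longleftrightarrow> uncountable (UNIV :: 'i set) \<and> (\<forall>a::'i. countable {b. b < a})"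

definition unbounded :: "'i::wellorder set \<Rightarrow> bool" where
  "unbounded C \<longleftrightarrow> (\<forall>a. \<exists>c\<in>C. a < c)"

definition closed_set :: "'i::wellorder set \<Rightarrow> bool" where
  "closed_set C \<longleftrightarrow> (\<forall>a. (\<exists>c\<in>C. c < a) \<and> (\<forall>b<a. \<exists>c\<in>C. b < c \<and> c < a) \<longrightarrow> a \<in> C)"

definition club :: "'i::wellorder set \<Rightarrow> bool" where
  "club C \<longleftrightarrow> closed_set C \<and> unbounded C"

definition stationary :: "'i::wellorder set \<Rightarrow> bool" where
  "stationary S \<longleftrightarrow> (\<forall>C. club C \<longrightarrow> S \<inter> C \<noteq> {})"

text \<open>A tree (T, lt) with height function ht into 'i: lt is a strict partial
  order on T and, for every t, ht maps the predecessors of t order-isomorphically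
  onto the ordinals below ht t (so ht t is the order type of the predecessors).\<close>
definition tree_with_height :: "'t set \<Rightarrow> ('t \<Rightarrow> 't \<Rightarrow> bool) \<Rightarrow> ('t \<Rightarrow> 'i::wellorder) \<Rightarrow> bool" where
  "tree_with_height T lt ht \<longleftrightarrow>
     (\<forall>t\<in>T. \<not> lt t t) \<and>
     (\<forall>s\<in>T. \<forall>t\<in>T. \<forall>u\<in>T. lt s t \<and> lt t u \<longrightarrow> lt s u) \<and>
     (\<forall>t\<in>T. bij_betw ht {s\<in>T. lt s t} {b. b < ht t} \<and>
        (\<forall>s\<in>T. \<forall>s'\<in>T. lt s t \<and> lt s' t \<longrightarrow> (lt s s' \<longleftrightarrow> ht s < ht s')))"

definition chain_in :: "('t \<Rightarrow> 't \<Rightarrow> bool) \<Rightarrow> 't set \<Rightarrow> bool" where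
  "chain_in lt C \<longleftrightarrow> (\<forall>s\<in>C. \<forall>t\<in>C. s = t \<or> lt s t \<or> lt t s)"

definition antichain_in :: "'t set \<Rightarrow> ('t \<Rightarrow> 't \<Rightarrow> bool) \<Rightarrow> 't set \<Rightarrow> bool" where
  "antichain_in T lt A \<longleftrightarrow> A \<subseteq> T \<and> (\<forall>s\<in>A. \<forall>t\<in>A. s \<noteq> t \<longrightarrow> \<not> lt s t \<and> \<not> lt t s)"

text \<open>Aronszajn tree: height omega_1 (every level nonempty; all heights are
  countable ordinals since ht maps into 'i), countable levels, countable chains.\<close>
definition aronszajn :: "'t set \<Rightarrow> ('t \<Rightarrow> 't \<Rightarrow> bool) \<Rightarrow> ('t \<Rightarrow> 'i::wellorder) \<Rightarrow> bool" where
  "aronszajn T lt ht \<longleftrightarrow> tree_with_height T lt ht \<and>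
     (\<forall>a. \<exists>t\<in>T. ht t = a) \<and>
     (\<forall>a. countable {t\<in>T. ht t = a}) \<and>
     (\<forall>C\<subseteq>T. chain_in lt C \<longrightarrow> countable C)"

definition stationary_in_tree :: "('t \<Rightarrow> 'i::wellorder) \<Rightarrow> 't set \<Rightarrow> bool" where
  "stationary_in_tree ht X \<longleftrightarrow> stationary (ht ` X)"

definition SS_tree :: "'t set \<Rightarrow> ('t \<Rightarrow> 't \<Rightarrow> bool) \<Rightarrow> ('t \<Rightarrow> 'i::wellorder) \<Rightarrow> bool" where
  "SS_tree T lt ht \<longleftrightarrow> (\<forall>X\<subseteq>T. stationary_in_tree ht X \<longrightarrow>
       (\<exists>A\<subseteq>X. antichain_in T lt A \<and> stationary_in_tree ht A))"

end

theory Submission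
  imports Defs
begin

text \<open>Split every x a into its low part (nodes of height below a) and its high part. Fodor's
  lemma together with pigeonhole arguments over the countable levels of T shrinks E to a stationary
  set on which the low parts are one fixed finite set, the projections of the high part to level
  a are n nodes p a 0, ..., p a (n - 1), and there is one level d below all a at which every
  split among these nodes below a is already visible and at which their projections do not
  depend on a. Using the SS property once per coordinate makes every {p a i | a} an antichain,
  the choice of d excludes p a i < p b j for i \<noteq> j as well, and any comparability inside the
  union of the x a reduces to one of these.\<close>

lemma countable_atMost_omega1:
  assumes "is_omega1 TYPE('i::wellorder)"
  shows "countable {..a::'i}"
proof -
  have "{..a} = insert a {b. b < a}" by auto
  then show ?thesis using assms unfolding is_omega1_def by simp
qed

lemma countable_bounded_omega1:
  assumes om: "is_omega1 TYPE('i::wellorder)" and "countable (D::'i set)"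
  shows "\<exists>g. \<forall>d\<in>D. d < g"
proof -
  have "countable (\<Union>d\<in>D. {..d})"
    using assms countable_atMost_omega1[OF om] by blast
  moreover have "uncountable (UNIV::'i set)" using om unfolding is_omega1_def by simp
  ultimately have "(\<Union>d\<in>D. {..d}) \<noteq> UNIV" by auto
  then obtain g where "g \<notin> (\<Union>d\<in>D. {..d})" by blast
  then show ?thesis by (auto simp: not_le)
qed

lemma omega1_bound_function:
  assumes "is_omega1 TYPE('i::wellorder)"
  obtains ub :: "'i::wellorder set \<Rightarrow> 'i" where "\<And>D d. countable D \<Longrightarrow> d \<in> D \<Longrightarrow> d < ub D"
proof -
  have "d < (SOME g. \<forall>d\<in>D. d < g)" if D: "countable D" "d \<in> D" for D :: "'i set" and d
  proof -
    obtain g where "\<forall>d\<in>D. d < g" using countable_bounded_omega1[OF assms D(1)] ..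
    then have "\<forall>d\<in>D. d < (SOME g. \<forall>d\<in>D. d < g)" by (rule someI)
    then show ?thesis using D(2) by blast
  qed
  then show ?thesis by (rule that)
qed

text \<open>b is the supremum of a0 = s 0 < s 1 < ..., where s (n + 1) bounds g on {..s n}.\<close>
lemma closure_point:
  fixes g :: "'i::wellorder \<Rightarrow> 'i"
  assumes om: "is_omega1 TYPE('i)"
  obtains b where "a0 < b" "\<And>a. a < b \<Longrightarrow> g a < b"
proof -
  obtain ub :: "'i set \<Rightarrow> 'i" where ub: "\<And>D d. countable D \<Longrightarrow> d \<in> D \<Longrightarrow> d < ub D"
    using omega1_bound_function[OF om] by blast
  define s where "s = rec_nat a0 (\<lambda>_ c. ub (insert c (g ` {..c})))"
  have countable_step: "countable (insert (s n) (g ` {..s n}))" for n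
    using countable_atMost_omega1[OF om] by simp
  have g_less: "g a < s (Suc n)" if "a \<le> s n" for a n
  proof -
    have "s (Suc n) = ub (insert (s n) (g ` {..s n}))" by (simp add: s_def)
    then show ?thesis using ub[OF countable_step] that by simp
  qed
  have "countable (range s)" by simp
  then obtain c where "\<forall>d\<in>range s. d < c" using countable_bounded_omega1[OF om] by blast
  then have "\<forall>n. s n < c" by blast
  define b where "b = (LEAST b. \<forall>n. s n < b)"
  have s_below_b: "\<forall>n. s n < b" unfolding b_def by (rule LeastI) fact
  have "g a < b" if "a < b" for a
  proof -
    have "\<not> (\<forall>n. s n < a)" using that unfolding b_def by (rule not_less_Least)
    then obtain n where "a \<le> s n" by (auto simp: not_less)
    then have "g a < s (Suc n)" by (rule g_less)
    also have "s (Suc n) < b" using s_below_b by blast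
    finally show ?thesis .
  qed
  moreover have "a0 < b" using s_below_b[rule_format, of 0] by (simp add: s_def)
  ultimately show ?thesis using that by blast
qed

lemma closed_set_cofinal_mem:
  assumes "closed_set C" and "b0 < a"
    and cofinal: "\<And>b. b0 \<le> b \<Longrightarrow> b < a \<Longrightarrow> \<exists>c\<in>C. b < c \<and> c < a"
  shows "a \<in> C"
proof -
  have "\<exists>c\<in>C. b < c \<and> c < a" if "b < a" for b
  proof -
    have "b0 \<le> max b b0" "max b b0 < a" using that \<open>b0 < a\<close> by auto
    then obtain c where "c \<in> C" "max b b0 < c" "c < a" using cofinal by blast
    then show ?thesis by auto
  qed
  then show ?thesis using assms(1,2) unfolding closed_set_def by blast
qed

lemma club_UNIV:
  assumes "is_omega1 TYPE('i::wellorder)"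
  shows "club (UNIV::'i set)"
  unfolding club_def closed_set_def unbounded_def
proof (simp, intro allI)
  fix a :: 'i
  show "\<exists>c. a < c" using countable_bounded_omega1[OF assms, of "{a}"] by blast
qed

lemma stationary_nonempty:
  assumes "is_omega1 TYPE('i::wellorder)" and "stationary (S::'i set)"
  shows "S \<noteq> {}"
  using assms club_UNIV unfolding stationary_def by blast

lemma stationary_mono: "stationary S \<Longrightarrow> S \<subseteq> S' \<Longrightarrow> stationary S'"
  unfolding stationary_def by blast

lemma club_Int_greater:
  assumes "club C"
  shows "club (C \<inter> {g<..})"
proof -
  have "closed_set (C \<inter> {g<..})"
    unfolding closed_set_def
  proof (intro allI impI)
    fix a assume limit: "(\<exists>c\<in>C \<inter> {g<..}. c < a) \<and> (\<forall>b<a. \<exists>c\<in>C \<inter> {g<..}. b < c \<and> c < a)"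
    then have "a \<in> C" using assms unfolding club_def closed_set_def by blast
    moreover have "g < a" using limit by auto
    ultimately show "a \<in> C \<inter> {g<..}" by simp
  qed
  moreover have "unbounded (C \<inter> {g<..})"
    unfolding unbounded_def
  proof
    fix a
    obtain c where "c \<in> C" "max a g < c" using assms unfolding club_def unbounded_def by blast
    then show "\<exists>c\<in>C \<inter> {g<..}. a < c" by auto
  qed
  ultimately show ?thesis by (simp add: club_def)
qed

lemma stationary_Int_greater: "stationary S \<Longrightarrow> stationary (S \<inter> {g<..})"
  using club_Int_greater unfolding stationary_def by blast

lemma closed_diagonal_intersection:
  assumes closed: "\<And>b. closed_set (C b)"
  shows "closed_set {a. \<forall>b<a. a \<in> C b}"
  unfolding closed_set_def
proof (intro allI impI CollectI)
  fix a b
  assume cofinal: "(\<exists>c\<in>{a. \<forall>b<a. a \<in> C b}. c < a) \<and> (\<forall>e<a. \<exists>c\<in>{a. \<forall>b<a. a \<in> C b}. e < c \<and> c < a)"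
    and "b < a"
  have "\<exists>c\<in>C b. e < c \<and> c < a" if "b \<le> e" "e < a" for e
  proof -
    obtain c where "\<forall>b<c. c \<in> C b" "e < c" "c < a" using cofinal \<open>e < a\<close> by blast
    then show ?thesis using \<open>b \<le> e\<close> by auto
  qed
  then show "a \<in> C b" using closed_set_cofinal_mem[OF closed \<open>b < a\<close>] by blast
qed

text \<open>m is closed under a function g bounding, for every e, an element of each C b (b \<le> e)
  above e; hence every C b with b < m is cofinal in m.\<close>
lemma unbounded_diagonal_intersection:
  assumes om: "is_omega1 TYPE('i::wellorder)" and club: "\<And>b::'i. club (C b)"
  shows "unbounded {a. \<forall>b<a. a \<in> C b}"
  unfolding unbounded_def
proof
  fix a0
  define nxt where "nxt b e = (SOME c. c \<in> C b \<and> e < c)" for b e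
  have nxt: "nxt b e \<in> C b \<and> e < nxt b e" for b e
    unfolding nxt_def by (rule someI_ex) (use club[of b] in \<open>auto simp: club_def unbounded_def\<close>)
  obtain ub :: "'i set \<Rightarrow> 'i" where ub: "\<And>D d. countable D \<Longrightarrow> d \<in> D \<Longrightarrow> d < ub D"
    using omega1_bound_function[OF om] by blast
  define g where "g e = ub ((\<lambda>b. nxt b e) ` {..e})" for e
  have nxt_less_g: "b \<le> e \<Longrightarrow> nxt b e < g e" for b e
    unfolding g_def using ub countable_atMost_omega1[OF om, of e] by simp
  obtain m where "a0 < m" and m: "\<And>e. e < m \<Longrightarrow> g e < m" using closure_point[OF om] by blast
  have "m \<in> C b" if "b < m" for b
  proof (rule closed_set_cofinal_mem[OF _ that])
    show "closed_set (C b)" using club by (simp add: club_def)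
    fix e assume "b \<le> e" "e < m"
    then show "\<exists>c\<in>C b. e < c \<and> c < m"
      using nxt[of b e] nxt_less_g[of b e] m[of e] by (meson order.strict_trans)
  qed
  then show "\<exists>c\<in>{a. \<forall>b<a. a \<in> C b}. a0 < c" using \<open>a0 < m\<close> by blast
qed

lemma club_diagonal_intersection:
  assumes "is_omega1 TYPE('i::wellorder)" and "\<And>b::'i. club (C b)"
  shows "club {a. \<forall>b<a. a \<in> C b}"
  using assms closed_diagonal_intersection unbounded_diagonal_intersection
  unfolding club_def by blast

theorem fodor:
  assumes om: "is_omega1 TYPE('i::wellorder)" and "stationary S"
    and regressive: "\<forall>a\<in>S. \<exists>b<a. P a b"
  obtains b where "stationary {a\<in>S. P a (b::'i)}"
proof -
  have "\<exists>b. stationary {a\<in>S. P a b}"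
  proof (rule ccontr)
    assume "\<nexists>b. stationary {a\<in>S. P a b}"
    then have "\<forall>b. \<exists>C. club C \<and> {a\<in>S. P a b} \<inter> C = {}" unfolding stationary_def by blast
    then obtain C where C: "\<And>b. club (C b)" "\<And>b. {a\<in>S. P a b} \<inter> C b = {}" by metis
    then obtain a where "a \<in> S" "\<forall>b<a. a \<in> C b"
      using club_diagonal_intersection[OF om] \<open>stationary S\<close> unfolding stationary_def by blast
    then show False using regressive C(2) by blast
  qed
  then show ?thesis using that by blast
qed

lemma stationary_pigeonhole:
  fixes f :: "'i::wellorder \<Rightarrow> 'k"
  assumes om: "is_omega1 TYPE('i)" and "stationary S" and "countable K" and "f ` S \<subseteq> K"
  obtains k where "stationary {a\<in>S. f a = k}"
proof -
  obtain e :: "'k \<Rightarrow> nat" where "inj_on e K" using \<open>countable K\<close> unfolding countable_def by blast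
  moreover have "infinite (UNIV::'i set)" using om unfolding is_omega1_def using countable_finite by blast
  then obtain d :: "nat \<Rightarrow> 'i" where "inj d" using infinite_countable_subset by blast
  ultimately obtain h :: "'k \<Rightarrow> 'i" where h: "inj_on h K" by (metis comp_inj_on inj_on_subset subset_UNIV)
  obtain g where g: "\<forall>y\<in>h ` K. y < g"
    using countable_bounded_omega1[OF om countable_image[OF \<open>countable K\<close>]] ..
  have regressive: "\<forall>a\<in>S \<inter> {g<..}. \<exists>b<a. h (f a) = b"
    using g \<open>f ` S \<subseteq> K\<close> by (auto intro: order.strict_trans)
  obtain b where stat: "stationary {a\<in>S \<inter> {g<..}. h (f a) = b}"
    using fodor[OF om stationary_Int_greater[OF \<open>stationary S\<close>] regressive] by blast
  then obtain a1 where a1: "a1 \<in> {a\<in>S \<inter> {g<..}. h (f a) = b}"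
    using stationary_nonempty[OF om] by blast
  have "{a\<in>S \<inter> {g<..}. h (f a) = b} \<subseteq> {a\<in>S. f a = f a1}"
    using a1 h \<open>f ` S \<subseteq> K\<close> by (auto dest: inj_onD)
  then show ?thesis using that stat stationary_mono by blast
qed

lemma finite_bounded_below:
  fixes D :: "'a::linorder set"
  assumes "finite D" and "\<forall>d\<in>D. d < a" and "a0 < a"
  shows "\<exists>m<a. \<forall>d\<in>D. d \<le> m"
proof (cases "D = {}")
  case False
  then show ?thesis using assms by (intro exI[of _ "Max D"]) auto
qed (use \<open>a0 < a\<close> in blast)

lemma stationary_constant_low_part:
  fixes ht :: "'t \<Rightarrow> 'i::wellorder" and x :: "'i \<Rightarrow> 't set"
  assumes om: "is_omega1 TYPE('i)" and levels: "\<And>c. countable {t\<in>T. ht t = c}"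
    and "stationary E" and x: "\<forall>a\<in>E. finite (x a) \<and> x a \<subseteq> T"
  obtains E' F where "E' \<subseteq> E" "stationary E'" "\<forall>a\<in>E'. {t\<in>x a. ht t < a} = F"
proof -
  define L where "L a = {t\<in>x a. ht t < a}" for a
  fix a0 :: 'i \<comment> \<open>arbitrary: discarding the ordinals up to a0 leaves something below every a\<close>
  have regressive: "\<forall>a\<in>E \<inter> {a0<..}. \<exists>m<a. \<forall>t\<in>L a. ht t \<le> m"
  proof
    fix a assume "a \<in> E \<inter> {a0<..}"
    then have "finite (ht ` L a)" "\<forall>c\<in>ht ` L a. c < a" "a0 < a" using x by (auto simp: L_def)
    then show "\<exists>m<a. \<forall>t\<in>L a. ht t \<le> m" using finite_bounded_below[of "ht ` L a" a a0] by blast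
  qed
  obtain m where stat: "stationary {a\<in>E \<inter> {a0<..}. \<forall>t\<in>L a. ht t \<le> m}"
    using fodor[OF om stationary_Int_greater[OF \<open>stationary E\<close>] regressive] by blast
  define E0 where "E0 = {a\<in>E \<inter> {a0<..}. \<forall>t\<in>L a. ht t \<le> m}"
  have "{t\<in>T. ht t \<le> m} = (\<Union>c\<in>{..m}. {t\<in>T. ht t = c})" by auto
  then have "countable {t\<in>T. ht t \<le> m}" using countable_atMost_omega1[OF om] levels by simp
  then have countable_finite_subsets: "countable {A. finite A \<and> A \<subseteq> {t\<in>T. ht t \<le> m}}"
    by (rule countable_Collect_finite_subset)
  have "L ` E0 \<subseteq> {A. finite A \<and> A \<subseteq> {t\<in>T. ht t \<le> m}}"
    using x by (auto simp: E0_def L_def)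
  then obtain F where "stationary {a\<in>E0. L a = F}"
    using stationary_pigeonhole[OF om stat[folded E0_def] countable_finite_subsets] by blast
  moreover have "{a\<in>E0. L a = F} \<subseteq> E" unfolding E0_def by blast
  moreover have "\<forall>a\<in>{a\<in>E0. L a = F}. {t\<in>x a. ht t < a} = F" by (simp add: L_def)
  ultimately show ?thesis using that by blast
qed

context
  fixes T :: "'t set" and lt :: "'t \<Rightarrow> 't \<Rightarrow> bool" and ht :: "'t \<Rightarrow> 'i::wellorder"
  assumes tree: "tree_with_height T lt ht"
begin

definition tree_le :: "'t \<Rightarrow> 't \<Rightarrow> bool" where
  "tree_le s t \<longleftrightarrow> s = t \<or> lt s t"

text \<open>For c > ht t this is the junk value t.\<close>
definition pred_at :: "'t \<Rightarrow> 'i \<Rightarrow> 't" where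
  "pred_at t c = (if c < ht t then inv_into {s\<in>T. lt s t} ht c else t)"

definition detects_splits_below :: "'i \<Rightarrow> nat \<Rightarrow> (nat \<Rightarrow> 't) \<Rightarrow> 'i \<Rightarrow> bool" where
  "detects_splits_below a n u d \<longleftrightarrow> (\<forall>i<n. \<forall>j<n. \<forall>c<a.
     pred_at (u i) c \<noteq> pred_at (u j) c \<longrightarrow> pred_at (u i) d \<noteq> pred_at (u j) d)"

lemma tree_irrefl: "t \<in> T \<Longrightarrow> \<not> lt t t"
  using tree unfolding tree_with_height_def by blast

lemma tree_trans: "s \<in> T \<Longrightarrow> t \<in> T \<Longrightarrow> u \<in> T \<Longrightarrow> lt s t \<Longrightarrow> lt t u \<Longrightarrow> lt s u"
  using tree unfolding tree_with_height_def by blast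

lemma tree_bij_betw_preds: "t \<in> T \<Longrightarrow> bij_betw ht {s\<in>T. lt s t} {b. b < ht t}"
  using tree unfolding tree_with_height_def by blast

lemma tree_preds_ordered_by_ht:
  "t \<in> T \<Longrightarrow> s \<in> T \<Longrightarrow> s' \<in> T \<Longrightarrow> lt s t \<Longrightarrow> lt s' t \<Longrightarrow> lt s s' \<longleftrightarrow> ht s < ht s'"
  using tree unfolding tree_with_height_def by blast

lemma tree_ht_less: "s \<in> T \<Longrightarrow> t \<in> T \<Longrightarrow> lt s t \<Longrightarrow> ht s < ht t"
  using tree_bij_betw_preds[of t] unfolding bij_betw_def by blast

lemma tree_le_trans:
  "s \<in> T \<Longrightarrow> t \<in> T \<Longrightarrow> u \<in> T \<Longrightarrow> tree_le s t \<Longrightarrow> tree_le t u \<Longrightarrow> tree_le s u"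
  unfolding tree_le_def using tree_trans by blast

lemma tree_le_ht: "s \<in> T \<Longrightarrow> t \<in> T \<Longrightarrow> tree_le s t \<Longrightarrow> ht s \<le> ht t"
  unfolding tree_le_def using tree_ht_less by fastforce

lemma lt_if_tree_le_common:
  assumes "p \<in> T" and "q \<in> T" and "w \<in> T" and "tree_le p w" and "tree_le q w" and "ht p < ht q"
  shows "lt p q"
proof -
  have "p \<noteq> w" using tree_le_ht[of q w] assms by auto
  then have "lt p w" using \<open>tree_le p w\<close> by (simp add: tree_le_def)
  show ?thesis
  proof (cases "q = w")
    case False
    then have "lt q w" using \<open>tree_le q w\<close> by (simp add: tree_le_def)
    then show ?thesis using tree_preds_ordered_by_ht assms \<open>lt p w\<close> by blast
  qed (use \<open>lt p w\<close> in simp)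
qed

lemma pred_at_properties:
  assumes "t \<in> T" and "c \<le> ht t"
  shows pred_at_in_tree: "pred_at t c \<in> T" and ht_pred_at: "ht (pred_at t c) = c"
    and pred_at_le: "tree_le (pred_at t c) t"
proof -
  have "pred_at t c \<in> T \<and> ht (pred_at t c) = c \<and> tree_le (pred_at t c) t"
  proof (cases "c < ht t")
    case True
    then have c: "c \<in> ht ` {s\<in>T. lt s t}"
      using tree_bij_betw_preds[OF \<open>t \<in> T\<close>] by (simp add: bij_betw_def)
    have "inv_into {s\<in>T. lt s t} ht c \<in> {s\<in>T. lt s t}" using c by (rule inv_into_into)
    moreover have "ht (inv_into {s\<in>T. lt s t} ht c) = c" using c by (rule f_inv_into_f)
    ultimately show ?thesis using True by (simp add: pred_at_def tree_le_def)
  next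
    case False
    then show ?thesis using assms by (simp add: pred_at_def tree_le_def)
  qed
  then show "pred_at t c \<in> T" "ht (pred_at t c) = c" "tree_le (pred_at t c) t" by simp_all
qed

lemma pred_at_ht:
  assumes "t \<in> T" and "s \<in> T" and "tree_le s t"
  shows "pred_at t (ht s) = s"
proof (cases "s = t")
  case False
  then have "lt s t" using \<open>tree_le s t\<close> by (simp add: tree_le_def)
  then have "ht s < ht t" using tree_ht_less assms by blast
  moreover have "inv_into {s\<in>T. lt s t} ht (ht s) = s"
    using tree_bij_betw_preds[OF \<open>t \<in> T\<close>] \<open>lt s t\<close> \<open>s \<in> T\<close> by (simp add: bij_betw_def)
  ultimately show ?thesis by (simp add: pred_at_def)
qed (simp add: pred_at_def)

lemma pred_at_tree_le:
  assumes "s \<in> T" and "t \<in> T" and "tree_le s t" and "c \<le> ht s"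
  shows "pred_at s c = pred_at t c"
proof -
  have "tree_le (pred_at s c) t"
    using tree_le_trans pred_at_properties[OF \<open>s \<in> T\<close> \<open>c \<le> ht s\<close>] assms by blast
  then have "pred_at t (ht (pred_at s c)) = pred_at s c"
    using pred_at_ht pred_at_in_tree assms by blast
  then show ?thesis using ht_pred_at assms by simp
qed

lemma pred_at_pred_at:
  assumes "t \<in> T" and "c' \<le> c" and "c \<le> ht t"
  shows "pred_at (pred_at t c) c' = pred_at t c'"
proof -
  have "pred_at t c \<in> T" "tree_le (pred_at t c) t" "c' \<le> ht (pred_at t c)"
    using assms by (simp_all add: pred_at_in_tree pred_at_le ht_pred_at)
  then show ?thesis using pred_at_tree_le \<open>t \<in> T\<close> by blast
qed

lemma pred_at_eq_downward:
  assumes "s \<in> T" and "t \<in> T" and "pred_at s c = pred_at t c"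
    and "c' \<le> c" and "c \<le> ht s" and "c \<le> ht t"
  shows "pred_at s c' = pred_at t c'"
  using pred_at_pred_at[of s c' c] pred_at_pred_at[of t c' c] assms by simp

lemma pred_at_comparable_if_lt:
  assumes "s \<in> T" and "t \<in> T" and "lt s t" and "a \<le> ht s" and "b \<le> ht t" and "a \<noteq> b"
  shows "lt (pred_at s a) (pred_at t b) \<or> lt (pred_at t b) (pred_at s a)"
proof -
  have "tree_le s t" using \<open>lt s t\<close> by (simp add: tree_le_def)
  then have sa: "pred_at s a \<in> T" "ht (pred_at s a) = a" "tree_le (pred_at s a) t"
    using pred_at_properties[OF \<open>s \<in> T\<close> \<open>a \<le> ht s\<close>] tree_le_trans[OF _ \<open>s \<in> T\<close> \<open>t \<in> T\<close>]
    by blast+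
  have tb: "pred_at t b \<in> T" "ht (pred_at t b) = b" "tree_le (pred_at t b) t"
    using pred_at_properties[OF \<open>t \<in> T\<close> \<open>b \<le> ht t\<close>] by auto
  consider "a < b" | "b < a" using \<open>a \<noteq> b\<close> by fastforce
  then show ?thesis
  proof cases
    case 1
    then show ?thesis using lt_if_tree_le_common[OF sa(1) tb(1) \<open>t \<in> T\<close> sa(3) tb(3)] sa tb by simp
  next
    case 2
    then show ?thesis using lt_if_tree_le_common[OF tb(1) sa(1) \<open>t \<in> T\<close> tb(3) sa(3)] sa tb by simp
  qed
qed

text \<open>d is taken above the least splitting level of every pair that splits below a; a split
  persists upwards, so it is visible at d.\<close>
lemma detects_splits_below_exists:
  assumes "a0 < a" and nodes: "\<forall>i<n. u i \<in> T \<and> ht (u i) = a"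
  shows "\<exists>d<a. detects_splits_below a n u d"
proof -
  define first where "first i j = (LEAST c. pred_at (u i) c \<noteq> pred_at (u j) c)" for i j
  define D where "D = (\<lambda>(i, j). first i j) ` ({..<n} \<times> {..<n}) \<inter> {..<a}"
  have "finite D" unfolding D_def by (intro finite_Int disjI1 finite_imageI) simp
  then obtain d where "d < a" and d: "\<forall>c\<in>D. c \<le> d"
    using finite_bounded_below[of D a a0] \<open>a0 < a\<close> by (auto simp: D_def)
  have "pred_at (u i) d \<noteq> pred_at (u j) d"
    if "i < n" "j < n" "c < a" and split: "pred_at (u i) c \<noteq> pred_at (u j) c" for i j c
  proof
    assume agree: "pred_at (u i) d = pred_at (u j) d"
    have first_split: "pred_at (u i) (first i j) \<noteq> pred_at (u j) (first i j)"
      unfolding first_def using split by (rule LeastI)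
    have "first i j \<le> c" unfolding first_def using split by (rule Least_le)
    then have "first i j \<in> D" using that by (auto simp: D_def)
    then have "first i j \<le> d" using d by blast
    then show False
      using pred_at_eq_downward[OF _ _ agree] first_split nodes that \<open>d < a\<close> by auto
  qed
  then show ?thesis using \<open>d < a\<close> unfolding detects_splits_below_def by blast
qed

lemma stationary_enumerated_projections:
  assumes om: "is_omega1 TYPE('i)" and "stationary E" and x: "\<forall>a\<in>E. finite (x a) \<and> x a \<subseteq> T"
  obtains E' n and p :: "'i \<Rightarrow> nat \<Rightarrow> 't" where "E' \<subseteq> E" "stationary E'"
    "\<forall>a\<in>E'. \<forall>s\<in>x a. a \<le> ht s \<longrightarrow> (\<exists>i<n. pred_at s a = p a i)"
    "\<forall>a\<in>E'. \<forall>i<n. p a i \<in> T \<and> ht (p a i) = a"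
proof -
  define P where "P a = (\<lambda>s. pred_at s a) ` {s\<in>x a. a \<le> ht s}" for a
  obtain n where stat: "stationary {a\<in>E. card (P a) = n}"
    using stationary_pigeonhole[OF om \<open>stationary E\<close>, of UNIV "\<lambda>a. card (P a)"] by auto
  define E' where "E' = {a\<in>E. card (P a) = n}"
  define p where "p a = (SOME q. q ` {0..<n} = P a)" for a
  have p: "p a ` {0..<n} = P a" if "a \<in> E'" for a
  proof -
    have "finite (P a)" using x that by (simp add: P_def E'_def)
    then obtain q where "bij_betw q {0..<card (P a)} (P a)" using ex_bij_betw_nat_finite by blast
    then have "\<exists>q. q ` {0..<n} = P a" using that by (auto simp: E'_def bij_betw_def)
    then show ?thesis unfolding p_def by (rule someI_ex)
  qed
  have "\<forall>a\<in>E'. \<forall>s\<in>x a. a \<le> ht s \<longrightarrow> (\<exists>i<n. pred_at s a = p a i)"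
  proof (intro ballI impI)
    fix a s assume "a \<in> E'" "s \<in> x a" "a \<le> ht s"
    then have "pred_at s a \<in> p a ` {0..<n}" using p by (auto simp: P_def)
    then show "\<exists>i<n. pred_at s a = p a i" by auto
  qed
  moreover have "\<forall>a\<in>E'. \<forall>i<n. p a i \<in> T \<and> ht (p a i) = a"
  proof (intro ballI allI impI)
    fix a i assume "a \<in> E'" "i < n"
    then obtain s where "s \<in> x a" "a \<le> ht s" "p a i = pred_at s a"
      using p[of a] by (force simp: P_def)
    moreover from this have "s \<in> T" using x \<open>a \<in> E'\<close> by (auto simp: E'_def)
    ultimately show "p a i \<in> T \<and> ht (p a i) = a" by (simp add: pred_at_in_tree ht_pred_at)
  qed
  moreover have "E' \<subseteq> E" "stationary E'" using stat by (auto simp: E'_def)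
  ultimately show ?thesis using that by blast
qed

lemma stationary_common_splitting_level:
  assumes om: "is_omega1 TYPE('i)" and levels: "\<And>c. countable {t\<in>T. ht t = c}"
    and "stationary E" and nodes: "\<forall>a\<in>E. \<forall>i<n. p a i \<in> T \<and> ht (p a i) = a"
  obtains E' d where "E' \<subseteq> E" "stationary E'" "\<forall>a\<in>E'. d < a \<and> detects_splits_below a n (p a) d"
    "\<forall>a\<in>E'. \<forall>b\<in>E'. \<forall>i<n. pred_at (p a i) d = pred_at (p b i) d"
proof -
  fix a0 :: 'i
  have regressive: "\<forall>a\<in>E \<inter> {a0<..}. \<exists>d<a. detects_splits_below a n (p a) d"
  proof
    fix a assume "a \<in> E \<inter> {a0<..}"
    then show "\<exists>d<a. detects_splits_below a n (p a) d"
      using nodes by (intro detects_splits_below_exists[of a0 a n "p a"]) auto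
  qed
  obtain d where "stationary {a\<in>E \<inter> {a0<..}. detects_splits_below a n (p a) d}"
    using fodor[OF om stationary_Int_greater[OF \<open>stationary E\<close>] regressive] by blast
  then have stat: "stationary ({a\<in>E \<inter> {a0<..}. detects_splits_below a n (p a) d} \<inter> {d<..})"
    by (rule stationary_Int_greater)
  define E1 where "E1 = {a\<in>E \<inter> {a0<..}. detects_splits_below a n (p a) d} \<inter> {d<..}"
  define q where "q a = map (\<lambda>i. pred_at (p a i) d) [0..<n]" for a
  have "q ` E1 \<subseteq> lists {t\<in>T. ht t = d}"
    using nodes pred_at_in_tree ht_pred_at by (auto simp: q_def E1_def)
  then obtain qs where "stationary {a\<in>E1. q a = qs}"
    using stationary_pigeonhole[OF om stat[folded E1_def] countable_lists[OF levels]] by blast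
  moreover have "\<forall>a\<in>{a\<in>E1. q a = qs}. \<forall>b\<in>{a\<in>E1. q a = qs}. \<forall>i<n.
      pred_at (p a i) d = pred_at (p b i) d"
  proof (intro ballI allI impI)
    fix a b i assume "a \<in> {a\<in>E1. q a = qs}" "b \<in> {a\<in>E1. q a = qs}" "i < n"
    then have "q a ! i = q b ! i" by simp
    then show "pred_at (p a i) d = pred_at (p b i) d" using \<open>i < n\<close> by (simp add: q_def)
  qed
  moreover have "{a\<in>E1. q a = qs} \<subseteq> E"
    "\<forall>a\<in>{a\<in>E1. q a = qs}. d < a \<and> detects_splits_below a n (p a) d"
    by (auto simp: E1_def)
  ultimately show ?thesis using that by blast
qed

lemma stationary_antichain_selection:
  assumes SS: "SS_tree T lt ht" and "stationary S" and f: "\<forall>a\<in>S. f a \<in> T \<and> ht (f a) = a"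
  obtains S' where "S' \<subseteq> S" "stationary S'" "\<forall>a\<in>S'. \<forall>b\<in>S'. \<not> lt (f a) (f b)"
proof -
  have "ht ` f ` S = S" using f by (force simp: image_image)
  then have "stationary_in_tree ht (f ` S)" using \<open>stationary S\<close> by (simp add: stationary_in_tree_def)
  moreover have "f ` S \<subseteq> T" using f by blast
  ultimately have "\<exists>A\<subseteq>f ` S. antichain_in T lt A \<and> stationary_in_tree ht A"
    using SS unfolding SS_tree_def by blast
  then obtain A where A: "A \<subseteq> f ` S" "antichain_in T lt A" "stationary (ht ` A)"
    unfolding stationary_in_tree_def by blast
  have fA: "f a \<in> A" if "a \<in> ht ` A" for a
    using that A(1) f by force
  have htA: "ht ` A \<subseteq> S" using A(1) f by force
  have "\<not> lt (f a) (f b)" if "a \<in> ht ` A" "b \<in> ht ` A" for a b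
  proof (cases "a = b")
    case True
    then show ?thesis using fA that A(2) tree_irrefl by (auto simp: antichain_in_def)
  next
    case False
    then have "f a \<noteq> f b" using that htA f by (metis subsetD)
    then show ?thesis using fA that A(2) by (simp add: antichain_in_def)
  qed
  then show ?thesis using that htA A(3) by blast
qed

lemma stationary_coordinatewise_antichain:
  fixes p :: "'i \<Rightarrow> nat \<Rightarrow> 't"
  assumes SS: "SS_tree T lt ht" and "stationary S" and nodes: "\<forall>a\<in>S. \<forall>i<n. p a i \<in> T \<and> ht (p a i) = a"
  obtains S' where "S' \<subseteq> S" "stationary S'" "\<forall>a\<in>S'. \<forall>b\<in>S'. \<forall>i<n. \<not> lt (p a i) (p b i)"
proof -
  have "\<exists>S'\<subseteq>S. stationary S' \<and> (\<forall>a\<in>S'. \<forall>b\<in>S'. \<forall>i<k. \<not> lt (p a i) (p b i))" if "k \<le> n" for k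
    using that
  proof (induction k)
    case 0
    then show ?case using \<open>stationary S\<close> by blast
  next
    case (Suc k)
    then obtain S1 where S1: "S1 \<subseteq> S" "stationary S1" "\<forall>a\<in>S1. \<forall>b\<in>S1. \<forall>i<k. \<not> lt (p a i) (p b i)"
      by auto
    have "\<forall>a\<in>S1. p a k \<in> T \<and> ht (p a k) = a" using nodes S1(1) Suc.prems by auto
    then obtain S2 where S2: "S2 \<subseteq> S1" "stationary S2" "\<forall>a\<in>S2. \<forall>b\<in>S2. \<not> lt (p a k) (p b k)"
      by (rule stationary_antichain_selection[OF SS S1(2)])
    have "\<forall>a\<in>S2. \<forall>b\<in>S2. \<forall>i<Suc k. \<not> lt (p a i) (p b i)"
      using S1(3) S2(1,3) by (auto simp: less_Suc_eq)
    then show ?case using S1(1) S2(1,2) by (intro exI[of _ S2] conjI) auto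
  qed
  from this[of n] obtain S' where "S' \<subseteq> S" "stationary S'" "\<forall>a\<in>S'. \<forall>b\<in>S'. \<forall>i<n. \<not> lt (p a i) (p b i)"
    by blast
  then show ?thesis by (rule that)
qed

text \<open>If p a i < p b j, then p b i and p b j agree at d, hence they do not split below b and
  p a i = pred_at (p b j) a = pred_at (p b i) a, contradicting the antichain in coordinate i.\<close>
lemma no_cross_relation:
  assumes nodes: "\<forall>a\<in>S. \<forall>i<n. p a i \<in> T \<and> ht (p a i) = a"
    and splits: "\<forall>a\<in>S. d < a \<and> detects_splits_below a n (p a) d"
    and agree: "\<forall>a\<in>S. \<forall>b\<in>S. \<forall>i<n. pred_at (p a i) d = pred_at (p b i) d"
    and diagonal: "\<forall>a\<in>S. \<forall>b\<in>S. \<forall>i<n. \<not> lt (p a i) (p b i)"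
  shows "\<forall>a\<in>S. \<forall>b\<in>S. \<forall>i<n. \<forall>j<n. \<not> lt (p a i) (p b j)"
proof (intro ballI allI impI notI)
  fix a b i j assume "a \<in> S" "b \<in> S" "i < n" "j < n" and lt: "lt (p a i) (p b j)"
  have ai: "p a i \<in> T" "ht (p a i) = a" and bi: "p b i \<in> T" "ht (p b i) = b"
    and bj: "p b j \<in> T" "ht (p b j) = b" using nodes \<open>a \<in> S\<close> \<open>b \<in> S\<close> \<open>i < n\<close> \<open>j < n\<close> by auto
  have "a < b" using tree_ht_less[OF ai(1) bj(1) lt] ai bj by simp
  have le: "tree_le (p a i) (p b j)" using lt by (simp add: tree_le_def)
  have "d < a" using splits \<open>a \<in> S\<close> by blast
  have "pred_at (p b i) d = pred_at (p a i) d" using agree \<open>a \<in> S\<close> \<open>b \<in> S\<close> \<open>i < n\<close> by blast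
  also have "\<dots> = pred_at (p b j) d" using pred_at_tree_le[OF ai(1) bj(1) le] \<open>d < a\<close> ai(2) by simp
  finally have agree_at_d: "pred_at (p b i) d = pred_at (p b j) d" .
  have "\<forall>c<b. pred_at (p b i) c \<noteq> pred_at (p b j) c \<longrightarrow> pred_at (p b i) d \<noteq> pred_at (p b j) d"
    using splits \<open>b \<in> S\<close> \<open>i < n\<close> \<open>j < n\<close> unfolding detects_splits_below_def by blast
  then have "pred_at (p b i) a = pred_at (p b j) a" using agree_at_d \<open>a < b\<close> by blast
  also have "\<dots> = p a i" using pred_at_ht[OF bj(1) ai(1) le] ai by simp
  finally have "pred_at (p b i) a = p a i" .
  moreover have "a \<le> ht (p b i)" using bi(2) \<open>a < b\<close> by simp
  ultimately have "tree_le (p a i) (p b i)" using pred_at_le[OF bi(1)] by metis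
  moreover have "p a i \<noteq> p b i" using ai(2) bi(2) \<open>a < b\<close> by (metis less_irrefl)
  ultimately show False using diagonal \<open>a \<in> S\<close> \<open>b \<in> S\<close> \<open>i < n\<close> by (simp add: tree_le_def)
qed

lemma antichain_UN_uniform_parts:
  assumes x: "\<forall>a\<in>S. antichain_in T lt (x a)"
    and low: "\<forall>a\<in>S. {t\<in>x a. ht t < a} = F"
    and high: "\<forall>a\<in>S. \<forall>s\<in>x a. a \<le> ht s \<longrightarrow> (\<exists>i<n. pred_at s a = p a i)"
    and cross: "\<forall>a\<in>S. \<forall>b\<in>S. \<forall>i<n. \<forall>j<n. \<not> lt (p a i) (p b j)"
  shows "antichain_in T lt (\<Union>a\<in>S. x a)"
proof -
  have "\<not> lt s t" if ab: "a \<in> S" "b \<in> S" "s \<in> x a" "t \<in> x b" for a b s t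
  proof
    assume "lt s t"
    have "s \<in> T" "t \<in> T" using x ab by (auto simp: antichain_in_def)
    then have "s \<noteq> t" using \<open>lt s t\<close> tree_irrefl by blast
    have common: False if "c \<in> S" "s \<in> x c" "t \<in> x c" for c
      using x \<open>c \<in> S\<close> that \<open>lt s t\<close> \<open>s \<noteq> t\<close> by (auto simp: antichain_in_def)
    consider "ht s < a" | "ht t < b" | "a = b" | "a \<le> ht s" "b \<le> ht t" "a \<noteq> b"
      using not_less by blast
    then show False
    proof cases
      case 1
      then have "s \<in> x b" using low \<open>a \<in> S\<close> \<open>b \<in> S\<close> \<open>s \<in> x a\<close> by blast
      then show False using common \<open>b \<in> S\<close> \<open>t \<in> x b\<close> by blast
    next
      case 2
      then have "t \<in> x a" using low \<open>a \<in> S\<close> \<open>b \<in> S\<close> \<open>t \<in> x b\<close> by blast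
      then show False using common \<open>a \<in> S\<close> \<open>s \<in> x a\<close> by blast
    next
      case 3
      then show False using common ab by blast
    next
      case 4
      then obtain i j where "i < n" "j < n" and ij: "pred_at s a = p a i" "pred_at t b = p b j"
        using high ab by blast
      have "lt (p a i) (p b j) \<or> lt (p b j) (p a i)"
        using pred_at_comparable_if_lt[OF \<open>s \<in> T\<close> \<open>t \<in> T\<close> \<open>lt s t\<close> 4] ij by simp
      then show False using cross \<open>a \<in> S\<close> \<open>b \<in> S\<close> \<open>i < n\<close> \<open>j < n\<close> by blast
    qed
  qed
  then show ?thesis using x by (auto simp: antichain_in_def)
qed

end

theorem lemma4:
  fixes T :: "'t set" and lt :: "'t \<Rightarrow> 't \<Rightarrow> bool" and ht :: "'t \<Rightarrow> 'i::wellorder"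
    and E :: "'i set" and x :: "'i \<Rightarrow> 't set"
  assumes "is_omega1 TYPE('i)"
    and "stationary E"
    and "aronszajn T lt ht"
    and "SS_tree T lt ht"
    and "\<forall>a\<in>E. finite (x a) \<and> antichain_in T lt (x a)"
  shows "\<exists>E'\<subseteq>E. stationary E' \<and> antichain_in T lt (\<Union>a\<in>E'. x a)"
proof -
  note om = assms(1)
  have tree: "tree_with_height T lt ht" and levels: "\<And>c. countable {t\<in>T. ht t = c}"
    using assms(3) by (simp_all add: aronszajn_def)
  have x: "\<forall>a\<in>E. finite (x a) \<and> x a \<subseteq> T" using assms(5) by (simp add: antichain_in_def)
  obtain E1 F where E1: "E1 \<subseteq> E" "stationary E1" "\<forall>a\<in>E1. {t\<in>x a. ht t < a} = F"
    by (rule stationary_constant_low_part[OF om levels assms(2) x])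
  have x1: "\<forall>a\<in>E1. finite (x a) \<and> x a \<subseteq> T" using x E1(1) by blast
  obtain E2 and n :: nat and p where E2: "E2 \<subseteq> E1" "stationary E2"
      "\<forall>a\<in>E2. \<forall>s\<in>x a. a \<le> ht s \<longrightarrow> (\<exists>i<n. pred_at T lt ht s a = p a i)"
      "\<forall>a\<in>E2. \<forall>i<n. p a i \<in> T \<and> ht (p a i) = a"
    by (rule stationary_enumerated_projections[OF tree om E1(2) x1])
  obtain E3 d where E3: "E3 \<subseteq> E2" "stationary E3"
      "\<forall>a\<in>E3. d < a \<and> detects_splits_below T lt ht a n (p a) d"
      "\<forall>a\<in>E3. \<forall>b\<in>E3. \<forall>i<n. pred_at T lt ht (p a i) d = pred_at T lt ht (p b i) d"
    by (rule stationary_common_splitting_level[OF tree om levels E2(2) E2(4)])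
  have "\<forall>a\<in>E3. \<forall>i<n. p a i \<in> T \<and> ht (p a i) = a" using E2(4) E3(1) by blast
  then obtain E' where E': "E' \<subseteq> E3" "stationary E'" "\<forall>a\<in>E'. \<forall>b\<in>E'. \<forall>i<n. \<not> lt (p a i) (p b i)"
    by (rule stationary_coordinatewise_antichain[OF tree assms(4) E3(2)])
  have sub: "E' \<subseteq> E3" "E' \<subseteq> E2" "E' \<subseteq> E1" "E' \<subseteq> E" using E' E3 E2 E1 by blast+
  have "\<forall>a\<in>E'. \<forall>i<n. p a i \<in> T \<and> ht (p a i) = a"
    "\<forall>a\<in>E'. d < a \<and> detects_splits_below T lt ht a n (p a) d"
    "\<forall>a\<in>E'. \<forall>b\<in>E'. \<forall>i<n. pred_at T lt ht (p a i) d = pred_at T lt ht (p b i) d"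
    using E2(4) E3(3,4) sub(1,2) by blast+
  then have cross: "\<forall>a\<in>E'. \<forall>b\<in>E'. \<forall>i<n. \<forall>j<n. \<not> lt (p a i) (p b j)"
    using E'(3) by (rule no_cross_relation[OF tree])
  have "\<forall>a\<in>E'. antichain_in T lt (x a)" "\<forall>a\<in>E'. {t\<in>x a. ht t < a} = F"
    "\<forall>a\<in>E'. \<forall>s\<in>x a. a \<le> ht s \<longrightarrow> (\<exists>i<n. pred_at T lt ht s a = p a i)"
    using assms(5) E1(3) E2(3) sub(2-4) by blast+
  then have "antichain_in T lt (\<Union>a\<in>E'. x a)"
    using cross by (rule antichain_UN_uniform_parts[OF tree])
  then show ?thesis using sub(4) E'(2) by blast
qed

end
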